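(* Let $G=(V,E)$ be a graph on $V=\{1,\ldots,n\}$ and $b(\mathbf x)=\sum_{ij\in E}a_{ij}x_ix_j$ with $a_{ij}>0$ for all $ij\in E$. Then $Q=\operatorname{conv}(B)$ if and only if $G$ is bipartite.
   Context: $B=\{(\mathbf x,z)\in[0,1]^n\times\mathbb R:z=b(\mathbf x)\}$ and $\operatorname{conv}(B)$ is its convex hull. The McCormick polytopes are $P=\{(\mathbf x,\mathbf y)\in[0,1]^n\times[0,1]^{|E|}: y_{ij}\le x_i,\ y_{ij}\le x_j,\ y_{ij}\ge x_i+x_j-1\ \forall ij\in E\}$ and $Q=\{(\mathbf x,z)\in[0,1]^n\times\mathbb R:\exists\mathbf y\in[0,1]^{|E|}\text{ with }(\mathbf x,\mathbf y)\in P,\ z=\sum_{ij\in E}a_{ij}y_{ij}\}$. *)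

theory Defs
  imports "HOL-Analysis.Analysis"
begin

text \<open>Vertices: the finite type 'n (playing the role of {1,...,n}); edges: a set of
  2-element vertex sets (simple graph). Weights a are indexed by edges.\<close>

definition simple_graph :: "'n::finite set set \<Rightarrow> bool" where
  "simple_graph E \<longleftrightarrow> (\<forall>e\<in>E. card e = 2)"

definition bipartite :: "'n::finite set set \<Rightarrow> bool" where
  "bipartite E \<longleftrightarrow> (\<exists>S. \<forall>e\<in>E. card (e \<inter> S) = 1)"

definition cube01 :: "(real^'n::finite) set" where
  "cube01 = {x. \<forall>i. 0 \<le> x$i \<and> x$i \<le> 1}"

definition bilin :: "'n::finite set set \<Rightarrow> ('n set \<Rightarrow> real) \<Rightarrow> real^'n \<Rightarrow> real" where
  "bilin E a x = (\<Sum>e\<in>E. a e * (\<Prod>i\<in>e. x$i))"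

definition graph_B :: "'n::finite set set \<Rightarrow> ('n set \<Rightarrow> real) \<Rightarrow> ((real^'n) \<times> real) set" where
  "graph_B E a = {p. fst p \<in> cube01 \<and> snd p = bilin E a (fst p)}"

definition mccormick_P :: "'n::finite set set \<Rightarrow> ((real^'n) \<times> ('n set \<Rightarrow> real)) set" where
  "mccormick_P E = {(x, y). (x::real^'n) \<in> cube01 \<and> (\<forall>e. e \<notin> E \<longrightarrow> y e = 0) \<and>
     (\<forall>e\<in>E. 0 \<le> y e \<and> y e \<le> 1 \<and> (\<forall>i\<in>e. y e \<le> x$i) \<and> y e \<ge> (\<Sum>i\<in>e. x$i) - 1)}"

definition mccormick_Q :: "'n::finite set set \<Rightarrow> ('n set \<Rightarrow> real) \<Rightarrow> ((real^'n) \<times> real) set" where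
  "mccormick_Q E a = {(x, z). (x::real^'n) \<in> cube01 \<and>
     (\<exists>y. (x, y) \<in> mccormick_P E \<and> z = (\<Sum>e\<in>E. a e * y e))}"

end

theory Submission
  imports Defs
begin

text \<open>If G is bipartite with one side S, the McCormick fibre over x is the interval between
  the weighted lower and upper McCormick envelopes, and both endpoints lie in conv(B): the upper
  one because every point y of the cube is the mean of a distribution on the 0/1 vertices with
  E[v_i v_j] = min(y_i, y_j), the lower one by applying the same
  decomposition after replacing x_i by 1 - x_i on S, which turns each edge product into
  x_q - x_p x_q. Conversely, the centre (1/2, ..., 1/2) with z = 0 always lies in Q. If it lies in
  conv(B), then every point of a convex representation has b = 0, so x_i x_j = 0 and hence
  x_i + x_j \<le> 1 on every edge; since these sums average to 1, they equal 1, and each such point is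
  a 0/1 vector whose 1-entries form one side of a bipartition.\<close>

lemma simple_graph_edge:
  assumes "simple_graph E" "e \<in> E"
  obtains i j where "e = {i, j}" "i \<noteq> j"
  using assms unfolding simple_graph_def by (meson card_2_iff)

lemma convex_bound_ge:
  fixes a x y u v :: real
  assumes "a \<le> x" "a \<le> y" "0 \<le> u" "0 \<le> v" "u + v = 1"
  shows "a \<le> u * x + v * y"
  using convex_bound_le[of "-x" "-a" "-y" u v] assms by simp

lemma convex_cube01: "convex cube01"
  unfolding cube01_def by (rule convexI) (auto intro: convex_bound_le convex_bound_ge)

lemma mult_mccormick_bounds:
  fixes s t :: real
  assumes "0 \<le> s" "s \<le> 1" "0 \<le> t" "t \<le> 1"
  shows "max 0 (s + t - 1) \<le> s * t" "s * t \<le> min s t"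
proof -
  have "0 \<le> (1 - s) * (1 - t)" using assms by simp
  then show "max 0 (s + t - 1) \<le> s * t" using assms by (simp add: algebra_simps)
  show "s * t \<le> min s t"
    using assms by (simp add: mult_left_le mult_left_le_one_le)
qed

definition mccormick_edge :: "real^'n::finite \<Rightarrow> 'n set \<Rightarrow> real \<Rightarrow> bool" where
  "mccormick_edge x e t \<longleftrightarrow> 0 \<le> t \<and> t \<le> 1 \<and> (\<forall>i\<in>e. t \<le> x$i) \<and> (\<Sum>i\<in>e. x$i) - 1 \<le> t"

lemma mccormick_P_iff:
  "(x, y) \<in> mccormick_P E \<longleftrightarrow>
     x \<in> cube01 \<and> (\<forall>e. e \<notin> E \<longrightarrow> y e = 0) \<and> (\<forall>e\<in>E. mccormick_edge x e (y e))"
  unfolding mccormick_P_def mccormick_edge_def by auto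

lemma mccormick_Q_iff:
  "(x, z) \<in> mccormick_Q E a \<longleftrightarrow> (\<exists>y. (x, y) \<in> mccormick_P E \<and> z = (\<Sum>e\<in>E. a e * y e))"
  unfolding mccormick_Q_def mccormick_P_def by auto

lemma mccormick_edge_pair:
  assumes "x \<in> cube01" "i \<noteq> j"
  shows "mccormick_edge x {i, j} t \<longleftrightarrow> max 0 (x$i + x$j - 1) \<le> t \<and> t \<le> min (x$i) (x$j)"
  using assms unfolding mccormick_edge_def cube01_def by auto

lemma mccormick_edge_convex:
  assumes "mccormick_edge x1 e t1" "mccormick_edge x2 e t2" "0 \<le> u" "0 \<le> v" "u + v = 1"
  shows "mccormick_edge (u *\<^sub>R x1 + v *\<^sub>R x2) e (u * t1 + v * t2)"
proof -
  have mono: "u * s1 + v * s2 \<le> u * t1 + v * t2" if "s1 \<le> t1" "s2 \<le> t2" for s1 s2 t1 t2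
    using that assms(3,4) by (intro add_mono mult_left_mono)
  have "(\<Sum>i\<in>e. (u *\<^sub>R x1 + v *\<^sub>R x2)$i) - 1 = u * ((\<Sum>i\<in>e. x1$i) - 1) + v * ((\<Sum>i\<in>e. x2$i) - 1)"
    using assms(5) by (simp add: sum.distrib sum_distrib_left algebra_simps)
  then show ?thesis
    using assms mono[of _ t1 _ t2] mono[of t1 _ t2] unfolding mccormick_edge_def
    by (simp add: convex_bound_le convex_bound_ge)
qed

lemma convex_mccormick_Q: "convex (mccormick_Q E a)"
proof (rule convexI)
  fix p1 p2 and u v :: real
  assume "p1 \<in> mccormick_Q E a" "p2 \<in> mccormick_Q E a" and uv: "0 \<le> u" "0 \<le> v" "u + v = 1"
  then obtain x1 y1 x2 y2 where p: "p1 = (x1, \<Sum>e\<in>E. a e * y1 e)" "p2 = (x2, \<Sum>e\<in>E. a e * y2 e)"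
    and P: "(x1, y1) \<in> mccormick_P E" "(x2, y2) \<in> mccormick_P E"
    unfolding mccormick_Q_def by blast
  have "(u *\<^sub>R x1 + v *\<^sub>R x2, \<lambda>e. u * y1 e + v * y2 e) \<in> mccormick_P E"
    using P uv convexD[OF convex_cube01] unfolding mccormick_P_iff
    by (auto intro: mccormick_edge_convex)
  moreover have "u * (\<Sum>e\<in>E. a e * y1 e) + v * (\<Sum>e\<in>E. a e * y2 e) =
      (\<Sum>e\<in>E. a e * (u * y1 e + v * y2 e))"
    by (simp add: sum.distrib sum_distrib_left algebra_simps)
  ultimately show "u *\<^sub>R p1 + v *\<^sub>R p2 \<in> mccormick_Q E a"
    unfolding p by (auto simp: mccormick_Q_iff)
qed

lemma graph_B_subset_mccormick_Q:
  fixes E :: "'n::finite set set"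
  assumes "simple_graph E"
  shows "graph_B E a \<subseteq> mccormick_Q E a"
proof (clarsimp simp: graph_B_def)
  fix x :: "real^'n" assume x: "x \<in> cube01"
  define y where "y e = (if e \<in> E then \<Prod>i\<in>e. x$i else 0)" for e
  have "mccormick_edge x e (y e)" if eE: "e \<in> E" for e
  proof -
    obtain i j where e: "e = {i, j}" "i \<noteq> j" using simple_graph_edge[OF assms eE] .
    have "0 \<le> x$i" "x$i \<le> 1" "0 \<le> x$j" "x$j \<le> 1" using x unfolding cube01_def by auto
    then show ?thesis
      using mult_mccormick_bounds[of "x$i" "x$j"] eE
      unfolding e mccormick_edge_pair[OF x e(2)] y_def by (simp add: e(2))
  qed
  then have "(x, y) \<in> mccormick_P E" using x unfolding mccormick_P_iff y_def by auto
  moreover have "bilin E a x = (\<Sum>e\<in>E. a e * y e)" unfolding bilin_def y_def by simp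
  ultimately show "(x, bilin E a x) \<in> mccormick_Q E a" unfolding mccormick_Q_iff by blast
qed

subsection \<open>Decomposition of cube points into 0/1 vertices\<close>

definition cube_vertices :: "(real^'n::finite) set" where
  "cube_vertices = {v. \<forall>i. v$i = 0 \<or> v$i = 1}"

lemma finite_cube_vertices: "finite (cube_vertices :: (real^'n::finite) set)"
proof (rule finite_subset)
  show "cube_vertices \<subseteq> range (\<lambda>f::'n \<Rightarrow> bool. \<chi> i. if f i then 1 else (0::real))"
  proof
    fix v :: "real^'n" assume "v \<in> cube_vertices"
    then have "v = (\<chi> i. if v$i = 1 then 1 else 0)" by (auto simp: cube_vertices_def vec_eq_iff)
    then show "v \<in> range (\<lambda>f::'n \<Rightarrow> bool. \<chi> i. if f i then 1 else (0::real))"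
      by (rule range_eqI[where x="\<lambda>i. v$i = 1"])
  qed
qed simp

lemma cube_vertices_subset_cube01: "cube_vertices \<subseteq> cube01"
proof
  fix v assume v: "v \<in> cube_vertices"
  have "0 \<le> v$i \<and> v$i \<le> 1" for i using v unfolding cube_vertices_def by (cases "v$i = 0") auto
  then show "v \<in> cube01" unfolding cube01_def by blast
qed

text \<open>The law of the threshold vector (\<chi> i. if t \<le> y_i then 1 else 0) for t uniform in [0, 1]
  is such a decomposition.\<close>
definition min_decomposition :: "(real^'n::finite \<Rightarrow> real) \<Rightarrow> real^'n \<Rightarrow> bool" where
  "min_decomposition u y \<longleftrightarrow>
     (\<forall>v\<in>cube_vertices. 0 \<le> u v) \<and> sum u cube_vertices = 1 \<and>
     (\<forall>i. (\<Sum>v\<in>cube_vertices. u v * v$i) = y$i) \<and>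
     (\<forall>i j. (\<Sum>v\<in>cube_vertices. u v * (v$i * v$j)) = min (y$i) (y$j))"

lemma min_decomposition_vertex:
  fixes y :: "real^'n::finite"
  assumes "y \<in> cube_vertices"
  shows "min_decomposition (\<lambda>v. if v = y then 1 else 0) y"
proof -
  have delta: "(\<Sum>v\<in>cube_vertices. (if v = y then 1 else 0) * f v) = f y" for f :: "real^'n \<Rightarrow> real"
  proof -
    have "(\<Sum>v\<in>cube_vertices. (if v = y then 1 else 0) * f v) =
        (\<Sum>v\<in>cube_vertices. if v = y then f v else 0)"
      by (rule sum.cong) simp_all
    then show ?thesis using assms by (simp add: sum.delta[OF finite_cube_vertices])
  qed
  have "y$i * y$j = min (y$i) (y$j)" for i j
  proof -
    have "y$i = 0 \<or> y$i = 1" "y$j = 0 \<or> y$j = 1" using assms unfolding cube_vertices_def by auto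
    then show ?thesis by (elim disjE) simp_all
  qed
  then show ?thesis
    unfolding min_decomposition_def using delta[of "\<lambda>_. 1"] delta by simp
qed

lemma min_decomposition_mix:
  assumes "min_decomposition um ym" "min_decomposition up yp" "0 \<le> \<mu>" "\<mu> \<le> 1"
    and "\<And>i. y$i = \<mu> * ym$i + (1 - \<mu>) * yp$i"
    and "\<And>i j. min (y$i) (y$j) = \<mu> * min (ym$i) (ym$j) + (1 - \<mu>) * min (yp$i) (yp$j)"
  shows "min_decomposition (\<lambda>v. \<mu> * um v + (1 - \<mu>) * up v) y"
proof -
  have mix: "(\<Sum>v\<in>cube_vertices. (\<mu> * um v + (1 - \<mu>) * up v) * f v) =
      \<mu> * (\<Sum>v\<in>cube_vertices. um v * f v) + (1 - \<mu>) * (\<Sum>v\<in>cube_vertices. up v * f v)" for f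
    by (simp add: distrib_right sum.distrib sum_distrib_left mult.assoc)
  show ?thesis
    using assms mix[of "\<lambda>_. 1"] mix[of "\<lambda>v. v$_"] mix[of "\<lambda>v. v$_ * v$_"]
    unfolding min_decomposition_def by simp
qed

lemma finite_neighbours:
  fixes S :: "real set"
  assumes "finite S" "s1 \<in> S" "s2 \<in> S" "s1 < t" "t < s2"
  obtains tm tp where "tm \<in> S" "tp \<in> S" "s1 \<le> tm" "tm < t" "t < tp" "tp \<le> s2"
    "\<And>s. s \<in> S \<Longrightarrow> s = t \<or> s \<le> tm \<or> tp \<le> s"
proof
  let ?L = "{s\<in>S. s < t}" and ?U = "{s\<in>S. t < s}"
  have L: "finite ?L" "?L \<noteq> {}" and U: "finite ?U" "?U \<noteq> {}" using assms by auto
  show "Max ?L \<in> S" "Max ?L < t" using Max_in[OF L] by auto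
  show "Min ?U \<in> S" "t < Min ?U" using Min_in[OF U] by auto
  show "s1 \<le> Max ?L" "Min ?U \<le> s2" using assms L U by (simp_all add: Max_ge_iff Min_le_iff)
  show "s = t \<or> s \<le> Max ?L \<or> Min ?U \<le> s" if "s \<in> S" for s
    using that L U by (cases s t rule: linorder_cases) auto
qed

lemma min_level_shift:
  fixes a b t tm tp \<mu> :: real
  assumes "tm < t" "t < tp" "t = \<mu> * tm + (1 - \<mu>) * tp"
    and "a = t \<or> a \<le> tm \<or> tp \<le> a" "b = t \<or> b \<le> tm \<or> tp \<le> b"
  shows "min a b = \<mu> * min (if a = t then tm else a) (if b = t then tm else b)
           + (1 - \<mu>) * min (if a = t then tp else a) (if b = t then tp else b)"
  using assms by (cases "a = t"; cases "b = t") (auto simp: min_def algebra_simps)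

definition coord_values :: "real^'n::finite \<Rightarrow> real set" where
  "coord_values y = insert 0 (insert 1 (range (($) y)))"

text \<open>Moving the coordinates equal to a fractional value t of y to the neighbouring values
  tm < t < tp of y splits y into two cube points with fewer distinct values; no coordinate
  lies strictly between tm and tp, so min is affine along the way.\<close>
lemma coord_values_split:
  fixes y :: "real^'n::finite"
  assumes y: "y \<in> cube01" "y \<notin> cube_vertices"
  obtains ym yp \<mu> where "ym \<in> cube01" "yp \<in> cube01"
    "card (coord_values ym) < card (coord_values y)" "card (coord_values yp) < card (coord_values y)"
    "0 \<le> \<mu>" "\<mu> \<le> 1"
    "\<And>i. y$i = \<mu> * ym$i + (1 - \<mu>) * yp$i"
    "\<And>i j. min (y$i) (y$j) = \<mu> * min (ym$i) (ym$j) + (1 - \<mu>) * min (yp$i) (yp$j)"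
proof -
  obtain i0 where i0: "y$i0 \<noteq> 0" "y$i0 \<noteq> 1" using y(2) unfolding cube_vertices_def by blast
  define t where "t = y$i0"
  have "0 \<le> t" "t \<le> 1" using y(1) unfolding cube01_def t_def by auto
  then have t01: "0 < t" "t < 1" using i0 unfolding t_def by linarith+
  have t_in: "t \<in> coord_values y" "t \<notin> {0, 1}" using t01 unfolding t_def coord_values_def by auto
  have fin: "finite (coord_values y)" unfolding coord_values_def by simp
  have "0 \<in> coord_values y" "1 \<in> coord_values y" unfolding coord_values_def by simp_all
  then obtain tm tp where tm: "tm \<in> coord_values y" and tp: "tp \<in> coord_values y"
      and order: "0 \<le> tm" "tm < t" "t < tp" "tp \<le> 1"
      and gap_values: "\<And>s. s \<in> coord_values y \<Longrightarrow> s = t \<or> s \<le> tm \<or> tp \<le> s"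
    using finite_neighbours[OF fin _ _ t01] by blast
  have gap: "y$k = t \<or> y$k \<le> tm \<or> tp \<le> y$k" for k
    using gap_values unfolding coord_values_def by blast
  define ym where "ym = (\<chi> k. if y$k = t then tm else y$k)"
  define yp where "yp = (\<chi> k. if y$k = t then tp else y$k)"
  define \<mu> where "\<mu> = (tp - t) / (tp - tm)"
  have "\<mu> * (tp - tm) = tp - t" using order unfolding \<mu>_def by simp
  then have \<mu>_eq: "t = \<mu> * tm + (1 - \<mu>) * tp" by (simp add: algebra_simps)
  have \<mu>: "0 \<le> \<mu>" "\<mu> \<le> 1" using order unfolding \<mu>_def by (simp_all add: field_simps)
  have "coord_values ym \<subseteq> coord_values y - {t}" "coord_values yp \<subseteq> coord_values y - {t}"
    using t_in tm tp order unfolding coord_values_def ym_def yp_def by auto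
  then have "coord_values ym \<subset> coord_values y" "coord_values yp \<subset> coord_values y"
    using t_in by auto
  then have "card (coord_values ym) < card (coord_values y)"
      "card (coord_values yp) < card (coord_values y)"
    using fin by (simp_all add: psubset_card_mono)
  moreover have "ym \<in> cube01" "yp \<in> cube01"
    using y(1) order t01 unfolding ym_def yp_def cube01_def by auto
  moreover have "y$i = \<mu> * ym$i + (1 - \<mu>) * yp$i" for i
    using \<mu>_eq unfolding ym_def yp_def by (auto simp: algebra_simps)
  moreover have "min (y$i) (y$j) = \<mu> * min (ym$i) (ym$j) + (1 - \<mu>) * min (yp$i) (yp$j)" for i j
    unfolding ym_def yp_def using min_level_shift[OF order(2,3) \<mu>_eq gap gap] by simp
  ultimately show ?thesis using that \<mu> by blast
qed

lemma min_decomposition_exists: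
  fixes y :: "real^'n::finite"
  assumes "y \<in> cube01"
  shows "\<exists>u. min_decomposition u y"
  using assms
proof (induction y rule: measure_induct_rule[where f = "\<lambda>y. card (coord_values y)"])
  case (less y)
  show ?case
  proof (cases "y \<in> cube_vertices")
    case True
    then show ?thesis using min_decomposition_vertex by blast
  next
    case False
    show ?thesis
    proof (rule coord_values_split[OF less.prems False])
      fix ym yp :: "real^'n" and \<mu> :: real
      assume "ym \<in> cube01" "yp \<in> cube01"
        "card (coord_values ym) < card (coord_values y)" "card (coord_values yp) < card (coord_values y)"
      then obtain um up where "min_decomposition um ym" "min_decomposition up yp"
        using less.IH by blast
      then show "\<lbrakk>0 \<le> \<mu>; \<mu> \<le> 1; \<And>i. y$i = \<mu> * ym$i + (1 - \<mu>) * yp$i;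
          \<And>i j. min (y$i) (y$j) = \<mu> * min (ym$i) (ym$j) + (1 - \<mu>) * min (yp$i) (yp$j)\<rbrakk>
          \<Longrightarrow> \<exists>u. min_decomposition u y"
        using min_decomposition_mix by blast
    qed
  qed
qed

subsection \<open>The bipartite case\<close>

lemma convex_hull_graph_B_sum:
  fixes g :: "'b \<Rightarrow> real^'n::finite"
  assumes "finite V" "\<And>v. v \<in> V \<Longrightarrow> 0 \<le> u v" "sum u V = 1" "\<And>v. v \<in> V \<Longrightarrow> g v \<in> cube01"
    and "(\<Sum>v\<in>V. u v *\<^sub>R g v) = x"
    and "\<And>e. e \<in> E \<Longrightarrow> (\<Sum>v\<in>V. u v * (\<Prod>i\<in>e. g v $ i)) = c e"
  shows "(x, \<Sum>e\<in>E. a e * c e) \<in> convex hull graph_B E a"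
proof -
  have "(\<Sum>v\<in>V. u v * bilin E a (g v)) = (\<Sum>e\<in>E. a e * (\<Sum>v\<in>V. u v * (\<Prod>i\<in>e. g v $ i)))"
    unfolding bilin_def by (simp add: sum_distrib_left sum.swap[of _ V] algebra_simps)
  then have "(\<Sum>v\<in>V. u v *\<^sub>R (g v, bilin E a (g v))) = (x, \<Sum>e\<in>E. a e * c e)"
    using assms(5,6) by (simp add: prod_eq_iff fst_sum snd_sum)
  moreover have "(\<Sum>v\<in>V. u v *\<^sub>R (g v, bilin E a (g v))) \<in> convex hull graph_B E a"
    using assms(1-4) by (intro convex_sum) (auto intro!: hull_inc simp: graph_B_def)
  ultimately show ?thesis by simp
qed

definition mccormick_upper :: "'n::finite set set \<Rightarrow> ('n set \<Rightarrow> real) \<Rightarrow> real^'n \<Rightarrow> real" where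
  "mccormick_upper E a x = (\<Sum>e\<in>E. a e * Min ((\<lambda>i. x$i) ` e))"

definition mccormick_lower :: "'n::finite set set \<Rightarrow> ('n set \<Rightarrow> real) \<Rightarrow> real^'n \<Rightarrow> real" where
  "mccormick_lower E a x = (\<Sum>e\<in>E. a e * max 0 ((\<Sum>i\<in>e. x$i) - 1))"

lemma mccormick_upper_in_convex_hull:
  fixes E :: "'n::finite set set"
  assumes "simple_graph E" "x \<in> cube01"
  shows "(x, mccormick_upper E a x) \<in> convex hull graph_B E a"
proof -
  obtain u where u: "min_decomposition u x" using min_decomposition_exists[OF assms(2)] by blast
  show ?thesis
    unfolding mccormick_upper_def
  proof (rule convex_hull_graph_B_sum[OF finite_cube_vertices, where u = u and g = id])
    show "(\<Sum>v\<in>cube_vertices. u v *\<^sub>R id v) = x"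
      using u unfolding min_decomposition_def by (simp add: vec_eq_iff)
    show "(\<Sum>v\<in>cube_vertices. u v * (\<Prod>i\<in>e. id v $ i)) = Min ((\<lambda>i. x$i) ` e)" if eE: "e \<in> E" for e
    proof -
      obtain i j where "e = {i, j}" "i \<noteq> j" using simple_graph_edge[OF assms(1) eE] .
      then show ?thesis using u unfolding min_decomposition_def by simp
    qed
  qed (use u cube_vertices_subset_cube01 in \<open>auto simp: min_decomposition_def\<close>)
qed

lemma edge_across_cut:
  assumes "card ({i, j} \<inter> S) = 1" "i \<noteq> j"
  obtains p q where "{i, j} = {p, q}" "p \<in> S" "q \<notin> S"
proof (cases "i \<in> S")
  case True
  then have "j \<notin> S" using assms by auto
  then show ?thesis using that True by blast
next
  case False
  then have "j \<in> S" using assms by (cases "j \<in> S") auto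
  then show ?thesis using that False by (metis insert_commute)
qed

definition flip_coords :: "'n set \<Rightarrow> real^'n::finite \<Rightarrow> real^'n" where
  "flip_coords S v = (\<chi> k. if k \<in> S then 1 - v$k else v$k)"

lemma flip_coords_nth: "flip_coords S v $ k = (if k \<in> S then 1 - v$k else v$k)"
  unfolding flip_coords_def by simp

lemma flip_coords_cube01: "v \<in> cube01 \<Longrightarrow> flip_coords S v \<in> cube01"
  unfolding cube01_def by (simp add: flip_coords_nth)

text \<open>On an edge pq with p \<in> S and q \<notin> S the product of the flipped coordinates is
  v_q - v_p v_q, whose mean under a min decomposition of the flipped point is
  x_q - min (1 - x_p) x_q = max 0 (x_p + x_q - 1).\<close>
lemma mccormick_lower_in_convex_hull:
  fixes E :: "'n::finite set set"
  assumes "simple_graph E" "\<forall>e\<in>E. card (e \<inter> S) = 1" "x \<in> cube01"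
  shows "(x, mccormick_lower E a x) \<in> convex hull graph_B E a"
proof -
  obtain u where u: "min_decomposition u (flip_coords S x)"
    using min_decomposition_exists[OF flip_coords_cube01[OF assms(3)]] by blast
  have mean: "(\<Sum>v\<in>cube_vertices. u v * v$k) = flip_coords S x $ k"
      and mean_flip: "(\<Sum>v\<in>cube_vertices. u v * (1 - v$k)) = 1 - flip_coords S x $ k" for k
    using u unfolding min_decomposition_def by (simp_all add: right_diff_distrib sum_subtractf)
  show ?thesis
    unfolding mccormick_lower_def
  proof (rule convex_hull_graph_B_sum[OF finite_cube_vertices, where u = u and g = "flip_coords S"])
    show "(\<Sum>v\<in>cube_vertices. u v *\<^sub>R flip_coords S v) = x"
    proof (rule vec_eq_iff[THEN iffD2], intro allI)
      fix k
      show "(\<Sum>v\<in>cube_vertices. u v *\<^sub>R flip_coords S v) $ k = x$k"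
        using mean[of k] mean_flip[of k] by (cases "k \<in> S") (simp_all add: flip_coords_nth)
    qed
    show "(\<Sum>v\<in>cube_vertices. u v * (\<Prod>k\<in>e. flip_coords S v $ k)) = max 0 ((\<Sum>k\<in>e. x$k) - 1)"
      if eE: "e \<in> E" for e
    proof -
      obtain i j where ij: "e = {i, j}" "i \<noteq> j" using simple_graph_edge[OF assms(1) eE] .
      then obtain p q where e: "e = {p, q}" "p \<in> S" "q \<notin> S"
        using assms(2) eE edge_across_cut by metis
      then have "p \<noteq> q" by blast
      then have "(\<Sum>v\<in>cube_vertices. u v * (\<Prod>k\<in>e. flip_coords S v $ k)) =
          (\<Sum>v\<in>cube_vertices. u v * v$q - u v * (v$p * v$q))"
        using e by (simp add: flip_coords_nth algebra_simps)
      also have "\<dots> = x$q - min (1 - x$p) (x$q)"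
        using u e unfolding min_decomposition_def by (simp add: sum_subtractf flip_coords_nth)
      also have "\<dots> = max 0 ((\<Sum>k\<in>e. x$k) - 1)"
        using e \<open>p \<noteq> q\<close> by (simp add: min_def max_def)
      finally show ?thesis .
    qed
  qed (use u flip_coords_cube01 cube_vertices_subset_cube01 in \<open>auto simp: min_decomposition_def\<close>)
qed

lemma mccormick_Q_bounds:
  fixes E :: "'n::finite set set"
  assumes "simple_graph E" "\<forall>e\<in>E. 0 < a e" "(x, z) \<in> mccormick_Q E a"
  shows "x \<in> cube01" "mccormick_lower E a x \<le> z" "z \<le> mccormick_upper E a x"
proof -
  obtain y where P: "(x, y) \<in> mccormick_P E" and z: "z = (\<Sum>e\<in>E. a e * y e)"
    using assms(3) unfolding mccormick_Q_iff by blast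
  then show x: "x \<in> cube01" unfolding mccormick_P_iff by blast
  have y: "max 0 ((\<Sum>i\<in>e. x$i) - 1) \<le> y e \<and> y e \<le> Min ((\<lambda>i. x$i) ` e)" if eE: "e \<in> E" for e
  proof -
    obtain i j where e: "e = {i, j}" "i \<noteq> j" using simple_graph_edge[OF assms(1) eE] .
    show ?thesis using P eE e(2) mccormick_edge_pair[OF x e(2)] unfolding mccormick_P_iff e by auto
  qed
  show "mccormick_lower E a x \<le> z" "z \<le> mccormick_upper E a x"
    unfolding mccormick_lower_def mccormick_upper_def z
    using y assms(2) by (intro sum_mono mult_left_mono, auto simp: less_imp_le)+
qed

lemma convex_fibre_interval:
  fixes C :: "('a::real_vector \<times> real) set"
  assumes "convex C" "(x, l) \<in> C" "(x, h) \<in> C" "l \<le> z" "z \<le> h"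
  shows "(x, z) \<in> C"
proof (cases "l = h")
  case True
  then show ?thesis using assms by simp
next
  case False
  define \<theta> where "\<theta> = (z - l) / (h - l)"
  have \<theta>: "0 \<le> \<theta>" "\<theta> \<le> 1" using assms(4,5) False unfolding \<theta>_def by (simp_all add: field_simps)
  have "\<theta> * (h - l) = z - l" using False unfolding \<theta>_def by simp
  then have "(1 - \<theta>) *\<^sub>R (x, l) + \<theta> *\<^sub>R (x, h) = (x, z)"
    by (simp add: algebra_simps scaleR_collapse)
  then show ?thesis using convexD_alt[OF assms(1-3) \<theta>] by simp
qed

lemma mccormick_Q_subset_convex_hull:
  fixes E :: "'n::finite set set"
  assumes "simple_graph E" "\<forall>e\<in>E. 0 < a e" "\<forall>e\<in>E. card (e \<inter> S) = 1"
  shows "mccormick_Q E a \<subseteq> convex hull graph_B E a"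
proof clarify
  fix x z assume xz: "(x, z) \<in> mccormick_Q E a"
  note bounds = mccormick_Q_bounds[OF assms(1,2) xz]
  show "(x, z) \<in> convex hull graph_B E a"
    by (rule convex_fibre_interval[OF convex_convex_hull
          mccormick_lower_in_convex_hull[OF assms(1,3) bounds(1)]
          mccormick_upper_in_convex_hull[OF assms(1) bounds(1)] bounds(2,3)])
qed

subsection \<open>The non-bipartite case\<close>

lemma centre_in_mccormick_Q:
  fixes E :: "'n::finite set set"
  assumes "simple_graph E"
  shows "((\<chi> i. 1/2) :: real^'n, 0) \<in> mccormick_Q E a"
proof -
  have c: "((\<chi> i. 1/2) :: real^'n) \<in> cube01" unfolding cube01_def by simp
  have "mccormick_edge (\<chi> i. 1/2) e 0" if eE: "e \<in> E" for e
  proof -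
    obtain i j where e: "e = {i, j}" "i \<noteq> j" using simple_graph_edge[OF assms eE] .
    show ?thesis unfolding e mccormick_edge_pair[OF c e(2)] by simp
  qed
  then have "((\<chi> i. 1/2) :: real^'n, \<lambda>_. 0) \<in> mccormick_P E" using c unfolding mccormick_P_iff by simp
  then show ?thesis unfolding mccormick_Q_iff by force
qed

lemma bilin_nonneg:
  assumes "\<forall>e\<in>E. 0 < a e" "x \<in> cube01"
  shows "0 \<le> bilin E a x"
  using assms unfolding bilin_def cube01_def
  by (intro sum_nonneg mult_nonneg_nonneg prod_nonneg) (auto simp: less_imp_le)

lemma bilin_eq_0_edge:
  fixes E :: "'n::finite set set"
  assumes "\<forall>e\<in>E. 0 < a e" "x \<in> cube01" "bilin E a x = 0" "{i, j} \<in> E" "i \<noteq> j"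
  shows "x$i * x$j = 0"
proof -
  have "\<forall>e\<in>E. a e * (\<Prod>k\<in>e. x$k) = 0"
    using assms(1-3) unfolding bilin_def cube01_def
    by (subst sum_nonneg_eq_0_iff[symmetric]) (auto intro!: mult_nonneg_nonneg prod_nonneg simp: less_imp_le)
  then have "a {i, j} * (\<Prod>k\<in>{i, j}. x$k) = 0" using assms(4) by blast
  then have "a {i, j} * (x$i * x$j) = 0" using assms(5) by simp
  moreover have "a {i, j} \<noteq> 0" using bspec[OF assms(1,4)] by simp
  ultimately show ?thesis by simp
qed

lemma weighted_sum_eq_0D:
  fixes u f :: "'a \<Rightarrow> real"
  assumes "finite s" "\<forall>q\<in>s. 0 \<le> u q" "\<forall>q\<in>s. 0 < u q \<longrightarrow> 0 \<le> f q"
    and "(\<Sum>q\<in>s. u q * f q) = 0" "p \<in> s" "0 < u p"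
  shows "f p = 0"
proof -
  have nonneg: "0 \<le> u q * f q" if "q \<in> s" for q
  proof (cases "0 < u q")
    case True
    then show ?thesis using assms(3) that by simp
  next
    case False
    then have "u q = 0" using assms(2) that by force
    then show ?thesis by simp
  qed
  have "\<forall>q\<in>s. u q * f q = 0" using assms(4) sum_nonneg_eq_0_iff[OF assms(1) nonneg] by simp
  then have "u p * f p = 0" using assms(5) by blast
  then show ?thesis using assms(6) by simp
qed

lemma bipartite_if_centre_in_convex_hull:
  fixes E :: "'n::finite set set"
  assumes "simple_graph E" "\<forall>e\<in>E. 0 < a e"
    and "((\<chi> i. 1/2) :: real^'n, 0) \<in> convex hull graph_B E a"
  shows "bipartite E"
proof -
  obtain s u where s: "finite s" "s \<subseteq> graph_B E a" "\<forall>p\<in>s. 0 \<le> u p" "sum u s = 1"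
    and centre: "(\<Sum>p\<in>s. u p *\<^sub>R p) = ((\<chi> i. 1/2) :: real^'n, 0)"
    using assms(3) unfolding convex_hull_explicit by blast
  have B: "fst p \<in> cube01" "snd p = bilin E a (fst p)" if "p \<in> s" for p
    using s(2) that unfolding graph_B_def by auto
  have "\<exists>p\<in>s. u p \<noteq> 0" using s(4) by (metis sum.neutral zero_neq_one)
  then obtain p0 where p0: "p0 \<in> s" "0 < u p0" using s(3) by (auto simp: less_le)
  have "(\<Sum>p\<in>s. u p * bilin E a (fst p)) = (\<Sum>p\<in>s. u p * snd p)"
    by (rule sum.cong) (simp_all add: B(2))
  also have "\<dots> = 0" using arg_cong[OF centre, of snd] by (simp add: snd_sum)
  finally have b0: "bilin E a (fst p) = 0" if "p \<in> s" "0 < u p" for p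
    using weighted_sum_eq_0D[OF s(1,3) _ _ that, where f = "\<lambda>q. bilin E a (fst q)"]
      B(1) bilin_nonneg[OF assms(2)] by blast
  have prod0: "fst p $ i * fst p $ j = 0" if "p \<in> s" "0 < u p" "{i, j} \<in> E" "i \<noteq> j" for p i j
    using bilin_eq_0_edge[OF assms(2) B(1) b0] that by blast
  have sum1: "fst p0 $ i + fst p0 $ j = 1" if "{i, j} \<in> E" "i \<noteq> j" for i j
  proof -
    have half: "(\<Sum>p\<in>s. u p * fst p $ k) = 1/2" for k
      using arg_cong[OF centre, of "\<lambda>q. fst q $ k"] by (simp add: fst_sum)
    have slack_sum: "(\<Sum>p\<in>s. u p * (1 - (fst p $ i + fst p $ j))) = 0"
      using s(4) half[of i] half[of j] by (simp add: algebra_simps sum.distrib sum_subtractf)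
    have slack_nonneg: "\<forall>p\<in>s. 0 < u p \<longrightarrow> 0 \<le> 1 - (fst p $ i + fst p $ j)"
    proof (intro ballI impI)
      fix p assume that: "p \<in> s" "0 < u p"
      have "fst p $ i \<le> 1" "fst p $ j \<le> 1" using B(1)[OF that(1)] unfolding cube01_def by auto
      then show "0 \<le> 1 - (fst p $ i + fst p $ j)"
        using prod0[OF that \<open>{i, j} \<in> E\<close> \<open>i \<noteq> j\<close>] by (auto simp: mult_eq_0_iff)
    qed
    show ?thesis using weighted_sum_eq_0D[OF s(1,3) slack_nonneg slack_sum p0] by simp
  qed
  have "card (e \<inter> {k. fst p0 $ k = 1}) = 1" if eE: "e \<in> E" for e
  proof -
    obtain i j where e: "e = {i, j}" "i \<noteq> j" using simple_graph_edge[OF assms(1) eE] .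
    have "fst p0 $ i * fst p0 $ j = 0" "fst p0 $ i + fst p0 $ j = 1"
      using prod0[OF p0, of i j] sum1[of i j] eE e by simp_all
    then have "e \<inter> {k. fst p0 $ k = 1} = {i} \<or> e \<inter> {k. fst p0 $ k = 1} = {j}"
      unfolding e by (auto simp: mult_eq_0_iff)
    then show ?thesis by auto
  qed
  then show ?thesis unfolding bipartite_def by blast
qed

theorem mainTheorem10:
  fixes E :: "'n::finite set set" and a :: "'n set \<Rightarrow> real"
  assumes "simple_graph E"
    and "\<forall>e\<in>E. a e > 0"
  shows "mccormick_Q E a = convex hull (graph_B E a) \<longleftrightarrow> bipartite E"
proof
  assume "mccormick_Q E a = convex hull (graph_B E a)"
  then show "bipartite E"
    using centre_in_mccormick_Q[OF assms(1), of a] bipartite_if_centre_in_convex_hull[OF assms] by simp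
next
  assume "bipartite E"
  then obtain S where "\<forall>e\<in>E. card (e \<inter> S) = 1" unfolding bipartite_def by blast
  then have "mccormick_Q E a \<subseteq> convex hull graph_B E a"
    using mccormick_Q_subset_convex_hull[OF assms] by blast
  moreover have "convex hull graph_B E a \<subseteq> mccormick_Q E a"
    by (rule hull_minimal[where S = convex, OF graph_B_subset_mccormick_Q[OF assms(1)] convex_mccormick_Q])
  ultimately show "mccormick_Q E a = convex hull (graph_B E a)" by (rule subset_antisym)
qed

end
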